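(* Let $\pi:P\to M$ be a principal fibre bundle with group $G=P^{-1}P$, in the setting described in the context, and assume $G$ is commutative. Let $\nabla$ be a connection in $PP^{-1}$ with connection form $\omega$. Then the unique $G$-valued 2-form $\Omega$ on $M$ with $\pi^*\Omega=d\omega$ equals the curvature $R_\nabla$ (regarded as a $G$-valued 2-form via the identification of gauge-valued forms with $G$-valued forms described in the context): $R_\nabla=\Omega$.
   Context: Setting: $\Phi$ is a groupoid whose object set contains a set $M$ and an object $*\notin M$; $P$ is the set of arrows of $\Phi$ with domain $*$ and codomain in $M$; $\pi:P\to M$ the codomain map; $G=P^{-1}P:=\Phi( *,* )$ acts on $P$ from the right by precomposition, freely and transitively on fibres. $PP^{-1}$ is the full subgroupoid of $\Phi$ on $M$, acting on $P$ from the left by postcomposition; composition is right to left. $M$ and $P$ carry reflexive symmetric neighbour relations $\sim$; an infinitesimal $k$-simplex is a $(k+1)$-tuple of mutual neighbours; $\pi$ preserves $\sim$; every infinitesimal $k$-simplex in $M$ lifts to one in $P$ starting at any prescribed point over its first vertex; the right action of each $g\in G$ preserves $\sim$. A connection in $PP^{-1}$ assigns to each $a\sim b$ in $M$ an arrow $\nabla(a,b):b\to a$ of $PP^{-1}$, with $\nabla(a,a)=\mathrm{id}$, $\nabla(b,a)=\nabla(a,b)^{-1}$; its connection form is $\omega(u,v):=u^{-1}(\nabla(\pi u,\pi v)\cdot v)\in G$; its curvature is $R_\nabla(a_0,a_1,a_2)=\nabla(a_0,a_1)\nabla(a_1,a_2)\nabla(a_2,a_0)\in PP^{-1}(a_0,a_0)$.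 For a $G$-valued 1-form, $d\omega(x_0,x_1,x_2)=\omega(x_0,x_1)\omega(x_1,x_2)\omega(x_2,x_0)$. For a $G$-valued 2-form $\Omega$ on $M$, $(\pi^*\Omega)(u_0,u_1,u_2)=\Omega(\pi u_0,\pi u_1,\pi u_2)$. When $G$ is commutative, each endo-arrow $h\in PP^{-1}(a,a)$ written as $h=yx^{-1}$ with $x,y\in\pi^{-1}(a)$ is identified with $x^{-1}y\in G$ (independent of the choice of representation); this identifies the gauge group bundle with $M\times G$ and gauge-valued forms on $M$ with $G$-valued forms on $M$. *)

theory Defs
  imports Main
begin

text \<open>A groupoid given by objects Obj, arrows Arr, domain/codomain maps, composition
  (right to left: cmp g f means first f then g), identities and inverses.\<close>

definition groupoid ::
  "'o set \<Rightarrow> 'a set \<Rightarrow> ('a \<Rightarrow> 'o) \<Rightarrow> ('a \<Rightarrow> 'o) \<Rightarrow> ('a \<Rightarrow> 'a \<Rightarrow> 'a) \<Rightarrow> ('o \<Rightarrow> 'a) \<Rightarrow> ('a \<Rightarrow> 'a) \<Rightarrow> bool"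
  where
  "groupoid Obj Arr src tgt cmp ide iv \<longleftrightarrow>
     (\<forall>f\<in>Arr. src f \<in> Obj \<and> tgt f \<in> Obj) \<and>
     (\<forall>f\<in>Arr. \<forall>g\<in>Arr. src g = tgt f \<longrightarrow>
         cmp g f \<in> Arr \<and> src (cmp g f) = src f \<and> tgt (cmp g f) = tgt g) \<and>
     (\<forall>f\<in>Arr. \<forall>g\<in>Arr. \<forall>h\<in>Arr. src g = tgt f \<longrightarrow> src h = tgt g \<longrightarrow>
         cmp h (cmp g f) = cmp (cmp h g) f) \<and>
     (\<forall>x\<in>Obj. ide x \<in> Arr \<and> src (ide x) = x \<and> tgt (ide x) = x) \<and>
     (\<forall>f\<in>Arr. cmp f (ide (src f)) = f \<and> cmp (ide (tgt f)) f = f) \<and>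
     (\<forall>f\<in>Arr. iv f \<in> Arr \<and> src (iv f) = tgt f \<and> tgt (iv f) = src f \<and>
         cmp (iv f) f = ide (src f) \<and> cmp f (iv f) = ide (tgt f))"

definition bundleP :: "'a set \<Rightarrow> ('a \<Rightarrow> 'o) \<Rightarrow> ('a \<Rightarrow> 'o) \<Rightarrow> 'o set \<Rightarrow> 'o \<Rightarrow> 'a set" where
  "bundleP Arr src tgt M s = {u \<in> Arr. src u = s \<and> tgt u \<in> M}"

definition groupG :: "'a set \<Rightarrow> ('a \<Rightarrow> 'o) \<Rightarrow> ('a \<Rightarrow> 'o) \<Rightarrow> 'o \<Rightarrow> 'a set" where
  "groupG Arr src tgt s = {g \<in> Arr. src g = s \<and> tgt g = s}"

text \<open>An infinitesimal simplex in S for the neighbour relation nb: a nonempty list of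
  points of S which are mutual neighbours (a k-simplex has length k+1).\<close>
definition inf_simplex :: "'x set \<Rightarrow> ('x \<Rightarrow> 'x \<Rightarrow> bool) \<Rightarrow> 'x list \<Rightarrow> bool" where
  "inf_simplex S nb xs \<longleftrightarrow> xs \<noteq> [] \<and> set xs \<subseteq> S \<and>
     (\<forall>i<length xs. \<forall>j<length xs. nb (xs ! i) (xs ! j))"

definition pfb_setting ::
  "'o set \<Rightarrow> 'a set \<Rightarrow> ('a \<Rightarrow> 'o) \<Rightarrow> ('a \<Rightarrow> 'o) \<Rightarrow> ('a \<Rightarrow> 'a \<Rightarrow> 'a) \<Rightarrow> ('o \<Rightarrow> 'a) \<Rightarrow> ('a \<Rightarrow> 'a)
    \<Rightarrow> 'o set \<Rightarrow> 'o \<Rightarrow> ('o \<Rightarrow> 'o \<Rightarrow> bool) \<Rightarrow> ('a \<Rightarrow> 'a \<Rightarrow> bool) \<Rightarrow> bool" where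
  "pfb_setting Obj Arr src tgt cmp ide iv M s nbM nbP \<longleftrightarrow>
     groupoid Obj Arr src tgt cmp ide iv \<and>
     M \<subseteq> Obj \<and> s \<in> Obj \<and> s \<notin> M \<and>
     (\<forall>a\<in>M. \<exists>u\<in>bundleP Arr src tgt M s. tgt u = a) \<and>
     (\<forall>a\<in>M. nbM a a) \<and> (\<forall>a\<in>M. \<forall>b\<in>M. nbM a b \<longrightarrow> nbM b a) \<and>
     (\<forall>u\<in>bundleP Arr src tgt M s. nbP u u) \<and>
     (\<forall>u\<in>bundleP Arr src tgt M s. \<forall>v\<in>bundleP Arr src tgt M s. nbP u v \<longrightarrow> nbP v u) \<and>
     (\<forall>u\<in>bundleP Arr src tgt M s. \<forall>v\<in>bundleP Arr src tgt M s. nbP u v \<longrightarrow> nbM (tgt u) (tgt v)) \<and>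
     (\<forall>xs. inf_simplex M nbM xs \<longrightarrow> (\<forall>u\<in>bundleP Arr src tgt M s. tgt u = hd xs \<longrightarrow>
        (\<exists>us. inf_simplex (bundleP Arr src tgt M s) nbP us \<and> map tgt us = xs \<and> hd us = u))) \<and>
     (\<forall>g\<in>groupG Arr src tgt s. \<forall>u\<in>bundleP Arr src tgt M s. \<forall>v\<in>bundleP Arr src tgt M s.
        nbP u v \<longrightarrow> nbP (cmp u g) (cmp v g))"

definition connection ::
  "'a set \<Rightarrow> ('a \<Rightarrow> 'o) \<Rightarrow> ('a \<Rightarrow> 'o) \<Rightarrow> ('o \<Rightarrow> 'a) \<Rightarrow> ('a \<Rightarrow> 'a)
    \<Rightarrow> 'o set \<Rightarrow> ('o \<Rightarrow> 'o \<Rightarrow> bool) \<Rightarrow> ('o \<Rightarrow> 'o \<Rightarrow> 'a) \<Rightarrow> bool" where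
  "connection Arr src tgt ide iv M nbM nabla \<longleftrightarrow>
     (\<forall>a\<in>M. \<forall>b\<in>M. nbM a b \<longrightarrow>
        nabla a b \<in> Arr \<and> src (nabla a b) = b \<and> tgt (nabla a b) = a \<and>
        nabla b a = iv (nabla a b)) \<and>
     (\<forall>a\<in>M. nabla a a = ide a)"

definition conn_form ::
  "('a \<Rightarrow> 'o) \<Rightarrow> ('a \<Rightarrow> 'a \<Rightarrow> 'a) \<Rightarrow> ('a \<Rightarrow> 'a) \<Rightarrow> ('o \<Rightarrow> 'o \<Rightarrow> 'a) \<Rightarrow> 'a \<Rightarrow> 'a \<Rightarrow> 'a" where
  "conn_form tgt cmp iv nabla u v = cmp (iv u) (cmp (nabla (tgt u) (tgt v)) v)"

definition d1 :: "('a \<Rightarrow> 'a \<Rightarrow> 'a) \<Rightarrow> ('x \<Rightarrow> 'x \<Rightarrow> 'a) \<Rightarrow> 'x \<Rightarrow> 'x \<Rightarrow> 'x \<Rightarrow> 'a" where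
  "d1 cmp \<omega> x0 x1 x2 = cmp (\<omega> x0 x1) (cmp (\<omega> x1 x2) (\<omega> x2 x0))"

definition curvature :: "('a \<Rightarrow> 'a \<Rightarrow> 'a) \<Rightarrow> ('o \<Rightarrow> 'o \<Rightarrow> 'a) \<Rightarrow> 'o \<Rightarrow> 'o \<Rightarrow> 'o \<Rightarrow> 'a" where
  "curvature cmp nabla a0 a1 a2 = cmp (nabla a0 a1) (cmp (nabla a1 a2) (nabla a2 a0))"

text \<open>Identification of an endo-arrow h at a with x^{-1} h x in G, for some x over a
  (with y = h x one has h = y x^{-1} and x^{-1} y = x^{-1} h x; independent of x
  when G is commutative).\<close>
definition gauge_to_G ::
  "'a set \<Rightarrow> ('a \<Rightarrow> 'o) \<Rightarrow> ('a \<Rightarrow> 'o) \<Rightarrow> ('a \<Rightarrow> 'a \<Rightarrow> 'a) \<Rightarrow> ('a \<Rightarrow> 'a) \<Rightarrow> 'o set \<Rightarrow> 'o \<Rightarrow> 'o \<Rightarrow> 'a \<Rightarrow> 'a" where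
  "gauge_to_G Arr src tgt cmp iv M s a h =
     (let x = (SOME x. x \<in> bundleP Arr src tgt M s \<and> tgt x = a) in cmp (iv x) (cmp h x))"

end

theory Submission
  imports Defs
begin

text \<open>Along a lifted simplex the connection form telescopes:
  d\<omega>(u0,u1,u2) = (u0\<inverse> \<nabla>01 u1)(u1\<inverse> \<nabla>12 u2)(u2\<inverse> \<nabla>20 u0) = u0\<inverse> R(a0,a1,a2) u0,
  a purely groupoid-theoretic identity. Commutativity of G makes the conjugate
  x\<inverse> h x of an endo-arrow h independent of the point x of the fibre, so u0\<inverse> R u0 is
  the G-value of R at a0, i.e. \<pi>*R = d\<omega>. Uniqueness holds because every infinitesimal
  2-simplex of M lifts to P, so a 2-form on M is determined by its pullback.\<close>

lemma inf_simplex_triple_iff: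
  "inf_simplex S nb [a0, a1, a2] \<longleftrightarrow> a0 \<in> S \<and> a1 \<in> S \<and> a2 \<in> S \<and>
     nb a0 a1 \<and> nb a1 a2 \<and> nb a2 a0 \<and> nb a0 a0 \<and> nb a1 a1 \<and> nb a2 a2 \<and>
     nb a1 a0 \<and> nb a2 a1 \<and> nb a0 a2"
  unfolding inf_simplex_def by (auto simp: less_Suc_eq nth_Cons')

lemma inf_simplex_map:
  assumes "inf_simplex S nb xs"
    and "\<And>x. x \<in> S \<Longrightarrow> f x \<in> T"
    and "\<And>x y. x \<in> S \<Longrightarrow> y \<in> S \<Longrightarrow> nb x y \<Longrightarrow> nb' (f x) (f y)"
  shows "inf_simplex T nb' (map f xs)"
  using assms unfolding inf_simplex_def by (auto simp: subset_iff)

locale groupoid_on =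
  fixes Obj :: "'o set" and Arr :: "'a set" and src tgt :: "'a \<Rightarrow> 'o"
    and cmp :: "'a \<Rightarrow> 'a \<Rightarrow> 'a" and ide :: "'o \<Rightarrow> 'a" and iv :: "'a \<Rightarrow> 'a"
  assumes groupoid: "groupoid Obj Arr src tgt cmp ide iv"
begin

lemma comp_in_Arr [simp]: "f \<in> Arr \<Longrightarrow> g \<in> Arr \<Longrightarrow> src g = tgt f \<Longrightarrow> cmp g f \<in> Arr"
  and src_comp [simp]: "f \<in> Arr \<Longrightarrow> g \<in> Arr \<Longrightarrow> src g = tgt f \<Longrightarrow> src (cmp g f) = src f"
  and tgt_comp [simp]: "f \<in> Arr \<Longrightarrow> g \<in> Arr \<Longrightarrow> src g = tgt f \<Longrightarrow> tgt (cmp g f) = tgt g"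
  and inv_in_Arr [simp]: "f \<in> Arr \<Longrightarrow> iv f \<in> Arr"
  and src_inv [simp]: "f \<in> Arr \<Longrightarrow> src (iv f) = tgt f"
  and tgt_inv [simp]: "f \<in> Arr \<Longrightarrow> tgt (iv f) = src f"
  and comp_ide_tgt [simp]: "f \<in> Arr \<Longrightarrow> cmp (ide (tgt f)) f = f"
  and comp_inv_left: "f \<in> Arr \<Longrightarrow> cmp (iv f) f = ide (src f)"
  and comp_inv_right: "f \<in> Arr \<Longrightarrow> cmp f (iv f) = ide (tgt f)"
  using groupoid unfolding groupoid_def by blast+

lemma comp_assoc [simp]:
  "f \<in> Arr \<Longrightarrow> g \<in> Arr \<Longrightarrow> h \<in> Arr \<Longrightarrow> src g = tgt f \<Longrightarrow> src h = tgt g \<Longrightarrow>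
   cmp (cmp h g) f = cmp h (cmp g f)"
  using groupoid unfolding groupoid_def by metis

lemma inv_comp_cancel [simp]:
  assumes "f \<in> Arr" "k \<in> Arr" "tgt k = src f"
  shows "cmp (iv f) (cmp f k) = k"
proof -
  have "cmp (iv f) (cmp f k) = cmp (cmp (iv f) f) k" using assms by simp
  then show ?thesis using assms by (metis comp_inv_left comp_ide_tgt)
qed

lemma comp_inv_cancel [simp]:
  assumes "f \<in> Arr" "k \<in> Arr" "tgt k = tgt f"
  shows "cmp f (cmp (iv f) k) = k"
proof -
  have "cmp f (cmp (iv f) k) = cmp (cmp f (iv f)) k" using assms by simp
  then show ?thesis using assms by (metis comp_inv_right comp_ide_tgt)
qed

lemma conj_in_groupG:
  assumes "x \<in> Arr" "h \<in> Arr" "src h = tgt x" "tgt h = tgt x"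
  shows "cmp (iv x) (cmp h x) \<in> groupG Arr src tgt (src x)"
  using assms unfolding groupG_def by simp

lemma conj_eq_if_groupG_commute:
  assumes comm: "\<forall>g\<in>groupG Arr src tgt s. \<forall>h\<in>groupG Arr src tgt s. cmp g h = cmp h g"
    and x: "x \<in> Arr" "src x = s" and u: "u \<in> Arr" "src u = s" and xu: "tgt x = tgt u"
    and h: "h \<in> Arr" "src h = tgt u" "tgt h = tgt u"
  shows "cmp (iv x) (cmp h x) = cmp (iv u) (cmp h u)"
proof -
  define g where "g = cmp (iv u) x"
  define k where "k = cmp (iv u) (cmp h u)"
  define k' where "k' = cmp (iv x) (cmp h x)"
  have gG: "g \<in> groupG Arr src tgt s" unfolding g_def groupG_def using x u xu by simp
  have kG: "k \<in> groupG Arr src tgt s" unfolding k_def using conj_in_groupG[OF u(1) h] u(2) by simp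
  have k'G: "k' \<in> groupG Arr src tgt s" unfolding k'_def using conj_in_groupG[OF x(1) h(1)] x(2) h xu by simp
  have "cmp g k' = cmp (iv u) (cmp h x)" unfolding g_def k'_def using x u xu h by simp
  also have "\<dots> = cmp k g" unfolding g_def k_def using x u xu h by simp
  also have "\<dots> = cmp g k" using comm gG kG by blast
  finally have "cmp g k' = cmp g k" .
  then have "cmp (iv g) (cmp g k') = cmp (iv g) (cmp g k)" by simp
  then show ?thesis using gG kG k'G unfolding k_def k'_def groupG_def by simp
qed

end

locale principal_bundle = groupoid_on Obj Arr src tgt cmp ide iv
  for Obj :: "'o set" and Arr :: "'a set" and src tgt :: "'a \<Rightarrow> 'o"
    and cmp :: "'a \<Rightarrow> 'a \<Rightarrow> 'a" and ide :: "'o \<Rightarrow> 'a" and iv :: "'a \<Rightarrow> 'a" +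
  fixes M :: "'o set" and s :: 'o and nbM :: "'o \<Rightarrow> 'o \<Rightarrow> bool" and nbP :: "'a \<Rightarrow> 'a \<Rightarrow> bool"
  assumes setting: "pfb_setting Obj Arr src tgt cmp ide iv M s nbM nbP"
begin

abbreviation P :: "'a set" where "P \<equiv> bundleP Arr src tgt M s"

abbreviation G :: "'a set" where "G \<equiv> groupG Arr src tgt s"

lemma fibre_nonempty: "a \<in> M \<Longrightarrow> \<exists>u\<in>P. tgt u = a"
  and nbM_tgt: "u \<in> P \<Longrightarrow> v \<in> P \<Longrightarrow> nbP u v \<Longrightarrow> nbM (tgt u) (tgt v)"
  and simplex_lift: "inf_simplex M nbM xs \<Longrightarrow> u \<in> P \<Longrightarrow> tgt u = hd xs \<Longrightarrow>
     \<exists>us. inf_simplex P nbP us \<and> map tgt us = xs \<and> hd us = u"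
  using setting unfolding pfb_setting_def by blast+

lemma inf_simplex_project: "inf_simplex P nbP us \<Longrightarrow> inf_simplex M nbM (map tgt us)"
  by (erule inf_simplex_map) (simp_all add: bundleP_def nbM_tgt)

lemma form_eq_if_pullback_eq:
  assumes pullback_eq: "\<And>u0 u1 u2. inf_simplex P nbP [u0, u1, u2] \<Longrightarrow>
      \<Omega> (tgt u0) (tgt u1) (tgt u2) = \<Theta> (tgt u0) (tgt u1) (tgt u2)"
    and simplex: "inf_simplex M nbM [a0, a1, a2]"
  shows "\<Omega> a0 a1 a2 = \<Theta> a0 a1 a2"
proof -
  have "a0 \<in> M" using simplex by (simp add: inf_simplex_triple_iff)
  then obtain u where u: "u \<in> P" "tgt u = a0" using fibre_nonempty by metis
  have "tgt u = hd [a0, a1, a2]" using u(2) by simp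
  then obtain us where us: "inf_simplex P nbP us" "map tgt us = [a0, a1, a2]"
    using simplex_lift[OF simplex u(1)] by metis
  then obtain u0 u1 u2 where lift: "us = [u0, u1, u2]" "tgt u0 = a0" "tgt u1 = a1" "tgt u2 = a2"
    by (auto simp: map_eq_Cons_conv)
  show ?thesis using pullback_eq[of u0 u1 u2] us(1) lift by simp
qed

lemma some_in_fibre:
  "a \<in> M \<Longrightarrow> (SOME x. x \<in> P \<and> tgt x = a) \<in> P \<and> tgt (SOME x. x \<in> P \<and> tgt x = a) = a"
  using fibre_nonempty unfolding Bex_def by (rule someI_ex)

lemma gauge_to_G_in_groupG:
  assumes a: "a \<in> M" and h: "h \<in> Arr" "src h = a" "tgt h = a"
  shows "gauge_to_G Arr src tgt cmp iv M s a h \<in> G"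
proof -
  define x where "x = (SOME x. x \<in> P \<and> tgt x = a)"
  have "x \<in> P \<and> tgt x = a" unfolding x_def using a by (rule some_in_fibre)
  then have "cmp (iv x) (cmp h x) \<in> G" using conj_in_groupG[of x h] h by (simp add: bundleP_def)
  then show ?thesis unfolding gauge_to_G_def x_def Let_def .
qed

lemma gauge_to_G_eq_conj:
  assumes comm: "\<forall>g\<in>G. \<forall>h\<in>G. cmp g h = cmp h g"
    and u: "u \<in> P" and h: "h \<in> Arr" "src h = tgt u" "tgt h = tgt u"
  shows "gauge_to_G Arr src tgt cmp iv M s (tgt u) h = cmp (iv u) (cmp h u)"
proof -
  define x where "x = (SOME x. x \<in> P \<and> tgt x = tgt u)"
  have "x \<in> P \<and> tgt x = tgt u"
    unfolding x_def using u by (intro some_in_fibre) (simp add: bundleP_def)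
  then have "cmp (iv x) (cmp h x) = cmp (iv u) (cmp h u)"
    using conj_eq_if_groupG_commute[OF comm] u h by (simp add: bundleP_def)
  then show ?thesis unfolding gauge_to_G_def x_def Let_def .
qed

end

locale bundle_connection = principal_bundle Obj Arr src tgt cmp ide iv M s nbM nbP
  for Obj :: "'o set" and Arr :: "'a set" and src tgt :: "'a \<Rightarrow> 'o"
    and cmp :: "'a \<Rightarrow> 'a \<Rightarrow> 'a" and ide :: "'o \<Rightarrow> 'a" and iv :: "'a \<Rightarrow> 'a"
    and M :: "'o set" and s :: 'o and nbM :: "'o \<Rightarrow> 'o \<Rightarrow> bool" and nbP :: "'a \<Rightarrow> 'a \<Rightarrow> bool" +
  fixes nabla :: "'o \<Rightarrow> 'o \<Rightarrow> 'a"
  assumes conn: "connection Arr src tgt ide iv M nbM nabla"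
begin

lemma connection_arrow:
  "a \<in> M \<Longrightarrow> b \<in> M \<Longrightarrow> nbM a b \<Longrightarrow>
   nabla a b \<in> Arr \<and> src (nabla a b) = b \<and> tgt (nabla a b) = a"
  using conn unfolding connection_def by blast

lemma curvature_endo:
  assumes "inf_simplex M nbM [a0, a1, a2]"
  shows "curvature cmp nabla a0 a1 a2 \<in> Arr \<and>
    src (curvature cmp nabla a0 a1 a2) = a0 \<and> tgt (curvature cmp nabla a0 a1 a2) = a0"
  using assms connection_arrow[of a0 a1] connection_arrow[of a1 a2] connection_arrow[of a2 a0]
  unfolding inf_simplex_triple_iff curvature_def by simp

lemma gauge_curvature_in_groupG:
  "inf_simplex M nbM [a0, a1, a2] \<Longrightarrow>
   gauge_to_G Arr src tgt cmp iv M s a0 (curvature cmp nabla a0 a1 a2) \<in> G"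
  using curvature_endo gauge_to_G_in_groupG by (simp add: inf_simplex_triple_iff)

lemma d_conn_form_eq_conj_curvature:
  assumes simplex: "inf_simplex P nbP [u0, u1, u2]"
  shows "d1 cmp (conn_form tgt cmp iv nabla) u0 u1 u2
    = cmp (iv u0) (cmp (curvature cmp nabla (tgt u0) (tgt u1) (tgt u2)) u0)"
proof -
  have us: "u0 \<in> P" "u1 \<in> P" "u2 \<in> P"
    and nb: "nbM (tgt u0) (tgt u1)" "nbM (tgt u1) (tgt u2)" "nbM (tgt u2) (tgt u0)"
    using simplex inf_simplex_project[OF simplex] by (simp_all add: inf_simplex_triple_iff)
  then have "tgt u0 \<in> M" "tgt u1 \<in> M" "tgt u2 \<in> M" by (simp_all add: bundleP_def)
  with us nb show ?thesis
    using connection_arrow[of "tgt u0" "tgt u1"] connection_arrow[of "tgt u1" "tgt u2"]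
      connection_arrow[of "tgt u2" "tgt u0"]
    unfolding d1_def conn_form_def curvature_def bundleP_def by simp
qed

lemma curvature_pullback_eq_d_conn_form:
  assumes comm: "\<forall>g\<in>G. \<forall>h\<in>G. cmp g h = cmp h g"
    and simplex: "inf_simplex P nbP [u0, u1, u2]"
  shows "gauge_to_G Arr src tgt cmp iv M s (tgt u0) (curvature cmp nabla (tgt u0) (tgt u1) (tgt u2))
    = d1 cmp (conn_form tgt cmp iv nabla) u0 u1 u2"
  using gauge_to_G_eq_conj[OF comm] curvature_endo[OF inf_simplex_project[OF simplex, simplified]]
    simplex d_conn_form_eq_conj_curvature[OF simplex]
  by (simp add: inf_simplex_triple_iff)

end

theorem corollary1:
  fixes Obj :: "'o set" and Arr :: "'a set" and src tgt :: "'a \<Rightarrow> 'o"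
    and cmp :: "'a \<Rightarrow> 'a \<Rightarrow> 'a" and ide :: "'o \<Rightarrow> 'a" and iv :: "'a \<Rightarrow> 'a"
    and M :: "'o set" and s :: 'o and nbM :: "'o \<Rightarrow> 'o \<Rightarrow> bool" and nbP :: "'a \<Rightarrow> 'a \<Rightarrow> bool"
    and nabla :: "'o \<Rightarrow> 'o \<Rightarrow> 'a"
  assumes setting: "pfb_setting Obj Arr src tgt cmp ide iv M s nbM nbP"
    and commG: "\<forall>g\<in>groupG Arr src tgt s. \<forall>h\<in>groupG Arr src tgt s. cmp g h = cmp h g"
    and conn: "connection Arr src tgt ide iv M nbM nabla"
  shows
    \<comment> \<open>the curvature, read as a G-valued 2-form, is G-valued and satisfies pi^* R = d omega\<close>
    "(\<forall>a0 a1 a2. inf_simplex M nbM [a0, a1, a2] \<longrightarrow>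
        gauge_to_G Arr src tgt cmp iv M s a0 (curvature cmp nabla a0 a1 a2) \<in> groupG Arr src tgt s) \<and>
     (\<forall>u0 u1 u2. inf_simplex (bundleP Arr src tgt M s) nbP [u0, u1, u2] \<longrightarrow>
        gauge_to_G Arr src tgt cmp iv M s (tgt u0) (curvature cmp nabla (tgt u0) (tgt u1) (tgt u2))
          = d1 cmp (conn_form tgt cmp iv nabla) u0 u1 u2) \<and>
     \<comment> \<open>and every G-valued 2-form Omega on M with pi^* Omega = d omega equals R\<close>
     (\<forall>\<Omega> :: 'o \<Rightarrow> 'o \<Rightarrow> 'o \<Rightarrow> 'a.
        (\<forall>a0 a1 a2. inf_simplex M nbM [a0, a1, a2] \<longrightarrow> \<Omega> a0 a1 a2 \<in> groupG Arr src tgt s) \<longrightarrow>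
        (\<forall>u0 u1 u2. inf_simplex (bundleP Arr src tgt M s) nbP [u0, u1, u2] \<longrightarrow>
           \<Omega> (tgt u0) (tgt u1) (tgt u2) = d1 cmp (conn_form tgt cmp iv nabla) u0 u1 u2) \<longrightarrow>
        (\<forall>a0 a1 a2. inf_simplex M nbM [a0, a1, a2] \<longrightarrow>
           \<Omega> a0 a1 a2 = gauge_to_G Arr src tgt cmp iv M s a0 (curvature cmp nabla a0 a1 a2)))"
proof -
  interpret bundle_connection Obj Arr src tgt cmp ide iv M s nbM nbP nabla
    using setting conn by unfold_locales (simp_all add: pfb_setting_def)
  note pullback = curvature_pullback_eq_d_conn_form[OF commG]
  \<comment> \<open>uniqueness does not need the hypothesis that \<Omega> is G-valued\<close>
  have uniqueness: "\<Omega> a0 a1 a2 = gauge_to_G Arr src tgt cmp iv M s a0 (curvature cmp nabla a0 a1 a2)"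
    if "\<forall>u0 u1 u2. inf_simplex P nbP [u0, u1, u2] \<longrightarrow>
          \<Omega> (tgt u0) (tgt u1) (tgt u2) = d1 cmp (conn_form tgt cmp iv nabla) u0 u1 u2"
      and "inf_simplex M nbM [a0, a1, a2]" for \<Omega> a0 a1 a2
    using form_eq_if_pullback_eq[where \<Theta> = "\<lambda>a0 a1 a2.
        gauge_to_G Arr src tgt cmp iv M s a0 (curvature cmp nabla a0 a1 a2)"] that pullback
    by simp
  show ?thesis using gauge_curvature_in_groupG pullback uniqueness by blast
qed

end
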